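(* For every rooted tree $T_r=(V,E)$, $$f(T_r)\ \ge\ \frac{|V|}{2\,h(T_r)}-\frac{1}{2}.$$
   Context: For a tree $T_r$ rooted at $r$, $h(T_r)$ is the number of vertices on a longest path in $T_r$ starting at $r$ (a single vertex has $h=1$); the empty tree $T_\emptyset$ has $h(T_\emptyset)=0$ and $f(T_\emptyset)=0$. For a vertex $v$, $T_v$ is the subtree rooted at $v$ consisting of $v$ and its descendants. The function $f$ is defined recursively: if $|V(T_r)|\le1$ then $f(T_r)=0$; otherwise let the children of $r$ be $v_1,\dots,v_k$ ordered so that $h(T_{v_1})\ge\dots\ge h(T_{v_k})$, where if the number of children is odd an extra empty tree $T_{v_k}=T_\emptyset$ is appended so that $k$ is even; then $f(T_r)=\max\{\sum_{i=1}^k f(T_{v_i}),\ \sum_{i=1}^{k/2} h(T_{v_{2i}})\}$. *)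

theory Defs
  imports Complex_Main
begin

text \<open>Finite rooted trees (unordered children are represented by a list; the
  order is irrelevant since f sorts the children by height).\<close>
datatype rtree = Node "rtree list"

fun nverts :: "rtree \<Rightarrow> nat" where
  "nverts (Node ts) = 1 + sum_list (map nverts ts)"

fun h :: "rtree \<Rightarrow> nat" where
  "h (Node ts) = 1 + foldr max (map h ts) 0"

text \<open>Heights of the children sorted non-increasingly, padded by the empty
  tree (height 0) if the number of children is odd.\<close>
definition padded_child_heights :: "rtree list \<Rightarrow> nat list" where
  "padded_child_heights ts =
     (let hs = rev (sort (map h ts)) in if odd (length hs) then hs @ [0] else hs)"

text \<open>Sum over i = 1..k/2 of h(T_{v_{2i}}) (1-based indices, i.e. 0-based index 2i+1).\<close>
definition pair_sum :: "rtree list \<Rightarrow> nat" where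
  "pair_sum ts = (let hs = padded_child_heights ts in
                    \<Sum>i<length hs div 2. hs ! (2 * i + 1))"

text \<open>The function f (the padding empty tree contributes f = 0 to the first sum).\<close>
fun f :: "rtree \<Rightarrow> nat" where
  "f (Node ts) = (if ts = [] then 0 else max (sum_list (map f ts)) (pair_sum ts))"

end

theory Submission
  imports Defs
begin

text \<open>By induction on the tree we show \<open>|V| \<le> h(T) (2 f(T) + 1)\<close>, which rearranges
  to the claim. Let \<open>H = h(T) - 1\<close> be the largest child height. The padded child heights
  are sorted non-increasingly, so bounding each height at an even position by its predecessor
  gives \<open>\<Sum>\<^sub>v h(T\<^sub>v) \<le> H + 2 pair_sum \<le> H + 2 f(T)\<close>. By induction each child satisfies
  \<open>|V(T\<^sub>v)| \<le> 2 H f(T\<^sub>v) + h(T\<^sub>v)\<close>; summing and using \<open>\<Sum>\<^sub>v f(T\<^sub>v) \<le> f(T)\<close> yields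
  \<open>|V| \<le> 1 + 2 H f(T) + H + 2 f(T) = h(T) (2 f(T) + 1)\<close>.\<close>

fun sum_odd_positions :: "nat list \<Rightarrow> nat" where
  "sum_odd_positions (a # b # rest) = b + sum_odd_positions rest"
| "sum_odd_positions _ = 0"

lemma sum_odd_positions_eq: "(\<Sum>i<length xs div 2. xs ! (2 * i + 1)) = sum_odd_positions xs"
proof (induction xs rule: sum_odd_positions.induct)
  case (1 a b rest)
  have "(\<Sum>i<length (a # b # rest) div 2. (a # b # rest) ! (2 * i + 1))
      = b + (\<Sum>i<length rest div 2. (a # b # rest) ! (2 * Suc i + 1))"
    by (simp add: sum.lessThan_Suc_shift del: sum.lessThan_Suc)
  also have "\<dots> = b + sum_odd_positions rest"
    using "1.IH" by simp
  finally show ?case by simp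
qed auto

lemma sum_list_le_bound_plus_double_sum_odd_positions:
  assumes "sorted_wrt (\<ge>) xs" and "\<forall>x\<in>set xs. x \<le> m"
  shows "sum_list xs \<le> m + 2 * sum_odd_positions xs"
  using assms
proof (induction xs arbitrary: m rule: sum_odd_positions.induct)
  case (1 a b rest)
  then have "sum_list rest \<le> b + 2 * sum_odd_positions rest" by simp
  then show ?case using "1.prems"(2) by simp
qed auto

lemma sum_list_insort: "sum_list (insort (x::'a::{linorder, comm_monoid_add}) xs) = x + sum_list xs"
  by (induction xs) (auto simp: add.left_commute)

lemma sum_list_sort: "sum_list (sort (xs::'a::{linorder, comm_monoid_add} list)) = sum_list xs"
  by (induction xs) (auto simp: sum_list_insort)

lemma member_le_foldr_max: "x \<in> set xs \<Longrightarrow> x \<le> foldr max xs (0::nat)"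
  by (induction xs) auto

lemma h_child_le: "t \<in> set ts \<Longrightarrow> h t \<le> foldr max (map h ts) 0"
  by (simp add: member_le_foldr_max)

lemma pair_sum_eq: "pair_sum ts = sum_odd_positions (padded_child_heights ts)"
  unfolding pair_sum_def Let_def by (simp only: sum_odd_positions_eq)

lemma sum_child_heights_le_pair_sum:
  "sum_list (map h ts) \<le> foldr max (map h ts) 0 + 2 * pair_sum ts"
proof -
  let ?H = "foldr max (map h ts) 0"
  have sorted: "sorted_wrt (\<ge>) (padded_child_heights ts)"
    unfolding padded_child_heights_def Let_def by (auto simp: sorted_wrt_rev sorted_wrt_append)
  have bounded: "\<forall>x\<in>set (padded_child_heights ts). x \<le> ?H"
    unfolding padded_child_heights_def Let_def by (auto simp: member_le_foldr_max)
  have "sum_list (map h ts) = sum_list (padded_child_heights ts)"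
    unfolding padded_child_heights_def Let_def by (simp add: sum_list_sort)
  also have "\<dots> \<le> ?H + 2 * pair_sum ts"
    using sum_list_le_bound_plus_double_sum_odd_positions[OF sorted bounded]
    by (simp add: pair_sum_eq)
  finally show ?thesis .
qed

lemma nverts_le_h_mult: "nverts T \<le> h T * (2 * f T + 1)"
proof (induction T)
  case (Node ts)
  show ?case
  proof (cases "ts = []")
    case True
    then show ?thesis by simp
  next
    case False
    define H where "H = foldr max (map h ts) 0"
    define g where "g = f (Node ts)"
    have g_ge: "sum_list (map f ts) \<le> g" "pair_sum ts \<le> g"
      using False by (auto simp: g_def)
    have child: "nverts t \<le> 2 * H * f t + h t" if t: "t \<in> set ts" for t
    proof -
      have "nverts t \<le> h t * (2 * f t) + h t"
        using Node.IH t by (simp add: algebra_simps)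
      also have "h t * (2 * f t) \<le> H * (2 * f t)"
        using h_child_le[OF t] unfolding H_def by (rule mult_le_mono1)
      finally show ?thesis by (simp add: mult.assoc)
    qed
    have "sum_list (map nverts ts) \<le> sum_list (map (\<lambda>t. 2 * H * f t + h t) ts)"
      using child by (intro sum_list_mono) auto
    also have "\<dots> = 2 * H * sum_list (map f ts) + sum_list (map h ts)"
      by (simp add: sum_list_addf sum_list_const_mult)
    also have "\<dots> \<le> 2 * H * g + H + 2 * g"
      using g_ge mult_le_mono2[OF g_ge(1), of "2 * H"] sum_child_heights_le_pair_sum[of ts]
      unfolding H_def by linarith
    finally have "nverts (Node ts) \<le> 1 + 2 * H * g + H + 2 * g" by simp
    also have "\<dots> = h (Node ts) * (2 * g + 1)"
      unfolding H_def by (simp add: algebra_simps)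
    finally show ?thesis unfolding g_def .
  qed
qed

theorem lemma2:
  fixes T :: rtree
  shows "real (f T) \<ge> real (nverts T) / (2 * real (h T)) - 1 / 2"
proof -
  have h_pos: "real (h T) > 0"
    by (cases T) simp
  have "real (nverts T) \<le> real (h T) * (2 * real (f T) + 1)"
    using of_nat_mono[OF nverts_le_h_mult[of T]] by (simp add: algebra_simps)
  then have "real (nverts T) / (2 * real (h T)) \<le> real (h T) * (2 * real (f T) + 1) / (2 * real (h T))"
    using h_pos by (intro divide_right_mono) auto
  also have "\<dots> = real (f T) + 1 / 2"
    using h_pos by (simp add: field_simps)
  finally show ?thesis by simp
qed

end
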